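(* Let $\Omega$ be a topological space, $X$ a locally convex topological vector space with defining family of seminorms $\mathfrak{A}$, $V \subset F(\Omega, \mathbb{R}_+)$, $f \in F(\Omega, X)$, $W \subset F(\Omega, X)$, $p \in \mathfrak{A}$, $v \in V$. Assume $\overline{(vf)(\Omega)}$ is compact. Then $d_{v, p, \Omega}(f, W) = 0$ if and only if for any $\varepsilon > 0$ and any finitely many $x_1, \dots, x_n \in X$ there is $g \in W$ such that for all $x\in\Omega$ and $i=1,\dots,n$: if $p(v(x)f(x) - x_i) < \varepsilon$ then $p(v(x)g(x) - x_i) < 2\varepsilon$.
   Context: $vf$ denotes the function $x\mapsto v(x)f(x)$. $d_{v,p,\Omega}(f,W)=\inf_{g\in W}\sup_{x\in\Omega}v(x)p(f(x)-g(x))$. *)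

theory Defs
  imports "HOL-Analysis.Analysis"
begin

definition seminorm :: "('x::real_vector \<Rightarrow> real) \<Rightarrow> bool" where
  "seminorm p \<longleftrightarrow> (\<forall>x. 0 \<le> p x) \<and> (\<forall>x y. p (x + y) \<le> p x + p y)
     \<and> (\<forall>c x. p (c *\<^sub>R x) = \<bar>c\<bar> * p x)"

definition seminorm_topology :: "('x::real_vector \<Rightarrow> real) set \<Rightarrow> 'x topology" where
  "seminorm_topology A = topology (\<lambda>U. \<forall>x\<in>U. \<exists>F e. finite F \<and> F \<subseteq> A \<and> 0 < e \<and>
       {y. \<forall>q\<in>F. q (y - x) < e} \<subseteq> U)"

definition weighted_dist ::
  "('a \<Rightarrow> real) \<Rightarrow> ('x::real_vector \<Rightarrow> real) \<Rightarrow> 'a set \<Rightarrow> ('a \<Rightarrow> 'x) \<Rightarrow> ('a \<Rightarrow> 'x) set \<Rightarrow> ennreal" where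
  "weighted_dist v p \<Omega> f W = (INF g\<in>W. SUP x\<in>\<Omega>. ennreal (v x * p (f x - g x)))"

end

theory Submission
  imports Defs
begin

text \<open>The distance vanishes iff \<open>vg\<close> approximates \<open>vf\<close> uniformly in \<open>p\<close> for suitable \<open>g \<in> W\<close>.
  A uniform \<open>\<epsilon>\<close>-approximation gives the local condition by the triangle inequality.
  Conversely, compactness of the closure of \<open>(vf)(\<Omega>)\<close> yields a finite \<open>\<epsilon>\<close>-net \<open>S\<close> of it in \<open>p\<close>;
  the local condition for \<open>S\<close> then gives \<open>p(vf - vg) < \<epsilon> + 2\<epsilon>\<close> on all of \<open>\<Omega>\<close>.\<close>

lemma seminorm_minus_commute: "seminorm p \<Longrightarrow> p (a - b) = p (b - a)"
  unfolding seminorm_def by (metis abs_neg_one minus_diff_eq mult_1 scaleR_minus1_left)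

lemma seminorm_triangle_diff: "seminorm p \<Longrightarrow> p (a - c) \<le> p (a - b) + p (b - c)"
  unfolding seminorm_def by (metis diff_add_cancel add_diff_eq)

lemma seminorm_zero: "seminorm p \<Longrightarrow> p 0 = 0"
  unfolding seminorm_def by (metis abs_0 mult_zero_left scaleR_zero_left)

lemma seminorm_scaleR_diff:
  "seminorm p \<Longrightarrow> 0 \<le> c \<Longrightarrow> p (c *\<^sub>R a - c *\<^sub>R b) = c * p (a - b)"
  unfolding seminorm_def by (metis abs_of_nonneg scaleR_diff_right)

lemma istopology_seminorm_open:
  fixes A :: "('a::real_vector \<Rightarrow> real) set"
  shows "istopology (\<lambda>U. \<forall>x\<in>U. \<exists>F e. finite F \<and> F \<subseteq> A \<and> 0 < e \<and> {y. \<forall>q\<in>F. q (y - x) < e} \<subseteq> U)"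
  (is "istopology ?open")
  unfolding istopology_def
proof (intro conjI allI impI)
  fix S T assume "?open S" "?open T"
  show "?open (S \<inter> T)"
  proof
    fix x assume "x \<in> S \<inter> T"
    with \<open>?open S\<close> obtain F1 e1
      where F1: "finite F1" "F1 \<subseteq> A" "0 < e1" "{y. \<forall>q\<in>F1. q (y - x) < e1} \<subseteq> S"
      by (meson IntD1)
    from \<open>x \<in> S \<inter> T\<close> \<open>?open T\<close> obtain F2 e2
      where F2: "finite F2" "F2 \<subseteq> A" "0 < e2" "{y. \<forall>q\<in>F2. q (y - x) < e2} \<subseteq> T"
      by (meson IntD2)
    have "{y. \<forall>q\<in>F1 \<union> F2. q (y - x) < min e1 e2} \<subseteq>
        {y. \<forall>q\<in>F1. q (y - x) < e1} \<inter> {y. \<forall>q\<in>F2. q (y - x) < e2}"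
      by auto
    also have "\<dots> \<subseteq> S \<inter> T"
      using F1(4) F2(4) by (rule Int_mono)
    finally show "\<exists>F e. finite F \<and> F \<subseteq> A \<and> 0 < e \<and> {y. \<forall>q\<in>F. q (y - x) < e} \<subseteq> S \<inter> T"
      using F1(1-3) F2(1-3) by (intro exI[of _ "F1 \<union> F2"] exI[of _ "min e1 e2"]) simp
  qed
next
  fix \<K> assume "\<forall>U\<in>\<K>. ?open U"
  show "?open (\<Union>\<K>)"
  proof
    fix x assume "x \<in> \<Union>\<K>"
    then obtain U where "U \<in> \<K>" "x \<in> U"
      by blast
    with \<open>\<forall>U\<in>\<K>. ?open U\<close> obtain F e
      where "finite F" "F \<subseteq> A" "0 < e" "{y. \<forall>q\<in>F. q (y - x) < e} \<subseteq> U"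
      by meson
    moreover have "U \<subseteq> \<Union>\<K>"
      using \<open>U \<in> \<K>\<close> by (rule Union_upper)
    ultimately show "\<exists>F e. finite F \<and> F \<subseteq> A \<and> 0 < e \<and> {y. \<forall>q\<in>F. q (y - x) < e} \<subseteq> \<Union>\<K>"
      by (meson order_trans)
  qed
qed

lemma openin_seminorm_topology:
  "openin (seminorm_topology A) U \<longleftrightarrow>
     (\<forall>x\<in>U. \<exists>F e. finite F \<and> F \<subseteq> A \<and> 0 < e \<and> {y. \<forall>q\<in>F. q (y - x) < e} \<subseteq> U)"
  unfolding seminorm_topology_def topology_inverse'[OF istopology_seminorm_open] by (rule refl)

lemma topspace_seminorm_topology [simp]: "topspace (seminorm_topology A) = UNIV"
proof -
  have "openin (seminorm_topology A) UNIV"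
    unfolding openin_seminorm_topology by (auto intro!: exI[of _ "{}"] exI[of _ "1::real"])
  then show ?thesis
    using openin_subset by auto
qed

lemma openin_seminorm_ball:
  assumes "seminorm p" "p \<in> A"
  shows "openin (seminorm_topology A) {y. p (y - c) < r}"
  unfolding openin_seminorm_topology
proof (intro ballI exI conjI)
  fix x assume "x \<in> {y. p (y - c) < r}"
  then show "0 < r - p (x - c)" by simp
  show "{y. \<forall>q\<in>{p}. q (y - x) < r - p (x - c)} \<subseteq> {y. p (y - c) < r}"
  proof clarsimp
    fix y assume "p (y - x) < r - p (x - c)"
    then show "p (y - c) < r"
      using seminorm_triangle_diff[OF assms(1), of y c x] by linarith
  qed
qed (use assms in auto)

lemma compactin_seminorm_finite_net:
  assumes "compactin (seminorm_topology A) K" "seminorm p" "p \<in> A" "0 < \<epsilon>"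
  obtains S where "finite S" "\<forall>y\<in>K. \<exists>c\<in>S. p (y - c) < \<epsilon>"
proof -
  let ?balls = "(\<lambda>c. {y. p (y - c) < \<epsilon>}) ` UNIV"
  have "\<forall>B\<in>?balls. openin (seminorm_topology A) B"
    using openin_seminorm_ball[OF assms(2,3)] by blast
  moreover have "y \<in> {z. p (z - y) < \<epsilon>}" for y
    using assms(4) seminorm_zero[OF assms(2)] by simp
  then have "K \<subseteq> \<Union>?balls"
    by blast
  ultimately obtain F where "finite F" "F \<subseteq> ?balls" "K \<subseteq> \<Union>F"
    using assms(1) unfolding compactin_def by meson
  then obtain S where "finite S" "F = (\<lambda>c. {y. p (y - c) < \<epsilon>}) ` S"
    by (meson finite_subset_image)
  with \<open>K \<subseteq> \<Union>F\<close> show ?thesis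
    using that by blast
qed

lemma weighted_dist_eq_0_iff:
  "weighted_dist v p \<Omega> f W = 0 \<longleftrightarrow> (\<forall>e>0. \<exists>g\<in>W. \<forall>x\<in>\<Omega>. v x * p (f x - g x) < e)"
proof
  assume "weighted_dist v p \<Omega> f W = 0"
  show "\<forall>e>0. \<exists>g\<in>W. \<forall>x\<in>\<Omega>. v x * p (f x - g x) < e"
  proof (intro allI impI)
    fix e :: real assume "0 < e"
    with \<open>weighted_dist v p \<Omega> f W = 0\<close>
    have "(INF g\<in>W. SUP x\<in>\<Omega>. ennreal (v x * p (f x - g x))) < ennreal e"
      unfolding weighted_dist_def by simp
    then obtain g where "g \<in> W" and sup: "(SUP x\<in>\<Omega>. ennreal (v x * p (f x - g x))) < ennreal e"
      unfolding INF_less_iff by blast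
    have "v x * p (f x - g x) < e" if "x \<in> \<Omega>" for x
    proof -
      have less: "ennreal (v x * p (f x - g x)) < ennreal e"
        using SUP_upper[OF that, of "\<lambda>x. ennreal (v x * p (f x - g x))"] sup
        by (rule order.strict_trans1)
      show ?thesis
      proof (rule ccontr)
        assume "\<not> v x * p (f x - g x) < e"
        then have "ennreal e \<le> ennreal (v x * p (f x - g x))"
          by (intro ennreal_leI) simp
        with less show False
          by (blast dest: leD)
      qed
    qed
    with \<open>g \<in> W\<close> show "\<exists>g\<in>W. \<forall>x\<in>\<Omega>. v x * p (f x - g x) < e"
      by blast
  qed
next
  assume approx: "\<forall>e>0. \<exists>g\<in>W. \<forall>x\<in>\<Omega>. v x * p (f x - g x) < e"
  have le_eps: "weighted_dist v p \<Omega> f W \<le> ennreal e" if "0 < e" for e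
  proof -
    obtain g where "g \<in> W" and g: "\<forall>x\<in>\<Omega>. v x * p (f x - g x) < e"
      using approx \<open>0 < e\<close> by blast
    have "(SUP x\<in>\<Omega>. ennreal (v x * p (f x - g x))) \<le> ennreal e"
    proof (rule SUP_least)
      fix x assume "x \<in> \<Omega>"
      with g show "ennreal (v x * p (f x - g x)) \<le> ennreal e"
        by (simp add: ennreal_leI less_imp_le)
    qed
    with \<open>g \<in> W\<close> show ?thesis
      unfolding weighted_dist_def
      by (rule INF_lower2[where f = "\<lambda>g. SUP x\<in>\<Omega>. ennreal (v x * p (f x - g x))"])
  qed
  have "weighted_dist v p \<Omega> f W \<le> 0"
    by (rule ennreal_le_epsilon) (simp add: le_eps)
  then show "weighted_dist v p \<Omega> f W = 0"
    by simp
qed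

lemma local_approx_if_uniform_approx:
  assumes "seminorm p" "p (F - G) < \<epsilon>" "p (F - c) < \<epsilon>"
  shows "p (G - c) < 2 * \<epsilon>"
  using seminorm_triangle_diff[OF assms(1), of G c F] seminorm_minus_commute[OF assms(1), of F G]
    assms(2,3) by linarith

lemma uniform_approx_if_local_approx:
  assumes p: "seminorm p"
    and net: "\<forall>x\<in>\<Omega>. \<exists>c\<in>S. p (F x - c) < \<epsilon>"
    and local: "\<forall>x\<in>\<Omega>. \<forall>c\<in>S. p (F x - c) < \<epsilon> \<longrightarrow> p (G x - c) < 2 * \<epsilon>"
  shows "\<forall>x\<in>\<Omega>. p (F x - G x) < 3 * \<epsilon>"
proof
  fix x assume "x \<in> \<Omega>"
  with net obtain c where "c \<in> S" "p (F x - c) < \<epsilon>"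
    by blast
  with local \<open>x \<in> \<Omega>\<close> have "p (G x - c) < 2 * \<epsilon>"
    by blast
  with \<open>p (F x - c) < \<epsilon>\<close> show "p (F x - G x) < 3 * \<epsilon>"
    using seminorm_triangle_diff[OF p, of "F x" "G x" c] seminorm_minus_commute[OF p, of c "G x"]
    by linarith
qed

lemma uniform_approx_iff_local_approx:
  fixes G :: "'b \<Rightarrow> 'a \<Rightarrow> 'x::real_vector"
  assumes p: "seminorm p"
    and totally_bounded: "\<And>\<epsilon>. 0 < \<epsilon> \<Longrightarrow> \<exists>S. finite S \<and> (\<forall>x\<in>\<Omega>. \<exists>c\<in>S. p (F x - c) < \<epsilon>)"
  shows "(\<forall>e>0. \<exists>g\<in>W. \<forall>x\<in>\<Omega>. p (F x - G g x) < e) \<longleftrightarrow>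
    (\<forall>\<epsilon>>0. \<forall>S. finite S \<longrightarrow>
      (\<exists>g\<in>W. \<forall>x\<in>\<Omega>. \<forall>c\<in>S. p (F x - c) < \<epsilon> \<longrightarrow> p (G g x - c) < 2 * \<epsilon>))"
proof (intro iffI allI impI)
  fix \<epsilon> :: real and S :: "'x set"
  assume "\<forall>e>0. \<exists>g\<in>W. \<forall>x\<in>\<Omega>. p (F x - G g x) < e" "0 < \<epsilon>"
  then obtain g where "g \<in> W" and g: "\<forall>x\<in>\<Omega>. p (F x - G g x) < \<epsilon>"
    by blast
  show "\<exists>g\<in>W. \<forall>x\<in>\<Omega>. \<forall>c\<in>S. p (F x - c) < \<epsilon> \<longrightarrow> p (G g x - c) < 2 * \<epsilon>"
  proof (intro bexI ballI impI)
    fix x c assume "x \<in> \<Omega>" "p (F x - c) < \<epsilon>"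
    from g \<open>x \<in> \<Omega>\<close> have "p (F x - G g x) < \<epsilon>"
      by blast
    then show "p (G g x - c) < 2 * \<epsilon>"
      using \<open>p (F x - c) < \<epsilon>\<close> by (rule local_approx_if_uniform_approx[OF p])
  qed fact
next
  fix e :: real
  assume local: "\<forall>\<epsilon>>0. \<forall>S. finite S \<longrightarrow>
      (\<exists>g\<in>W. \<forall>x\<in>\<Omega>. \<forall>c\<in>S. p (F x - c) < \<epsilon> \<longrightarrow> p (G g x - c) < 2 * \<epsilon>)"
    and "0 < e"
  then have "0 < e / 3"
    by simp
  then obtain S where "finite S" and net: "\<forall>x\<in>\<Omega>. \<exists>c\<in>S. p (F x - c) < e / 3"
    using totally_bounded by blast
  obtain g where "g \<in> W"
    and g: "\<forall>x\<in>\<Omega>. \<forall>c\<in>S. p (F x - c) < e / 3 \<longrightarrow> p (G g x - c) < 2 * (e / 3)"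
    using local \<open>finite S\<close> \<open>0 < e / 3\<close> by blast
  from net g have "\<forall>x\<in>\<Omega>. p (F x - G g x) < 3 * (e / 3)"
    by (rule uniform_approx_if_local_approx[OF p])
  with \<open>g \<in> W\<close> show "\<exists>g\<in>W. \<forall>x\<in>\<Omega>. p (F x - G g x) < e"
    by auto
qed

theorem lemma3p3:
  fixes T :: "'a topology" and \<Omega> :: "'a set"
    and A :: "('x::real_vector \<Rightarrow> real) set" and p :: "'x \<Rightarrow> real"
    and v :: "'a \<Rightarrow> real" and f :: "'a \<Rightarrow> 'x" and W :: "('a \<Rightarrow> 'x) set"
  assumes "\<Omega> = topspace T"
    and "\<forall>q\<in>A. seminorm q"
    and "p \<in> A"
    and "\<forall>x\<in>\<Omega>. 0 \<le> v x"
    and "compactin (seminorm_topology A)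
           ((seminorm_topology A) closure_of ((\<lambda>x. v x *\<^sub>R f x) ` \<Omega>))"
  shows "weighted_dist v p \<Omega> f W = 0 \<longleftrightarrow>
    (\<forall>\<epsilon>>0. \<forall>S. finite S \<longrightarrow> (\<exists>g\<in>W. \<forall>x\<in>\<Omega>. \<forall>xi\<in>S.
        p (v x *\<^sub>R f x - xi) < \<epsilon> \<longrightarrow> p (v x *\<^sub>R g x - xi) < 2 * \<epsilon>))"
proof -
  let ?K = "(seminorm_topology A) closure_of ((\<lambda>x. v x *\<^sub>R f x) ` \<Omega>)"
  have p: "seminorm p"
    using assms(2,3) by blast
  have scaled: "(\<forall>x\<in>\<Omega>. v x * p (f x - g x) < e) \<longleftrightarrow>
      (\<forall>x\<in>\<Omega>. p (v x *\<^sub>R f x - v x *\<^sub>R g x) < e)" for g e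
    using seminorm_scaleR_diff[OF p] assms(4) by auto
  have totally_bounded: "\<exists>S. finite S \<and> (\<forall>x\<in>\<Omega>. \<exists>c\<in>S. p (v x *\<^sub>R f x - c) < \<epsilon>)"
    if "0 < \<epsilon>" for \<epsilon>
  proof -
    obtain S where "finite S" "\<forall>y\<in>?K. \<exists>c\<in>S. p (y - c) < \<epsilon>"
      by (rule compactin_seminorm_finite_net[OF assms(5) p assms(3) \<open>0 < \<epsilon>\<close>])
    moreover have "(\<lambda>x. v x *\<^sub>R f x) ` \<Omega> \<subseteq> ?K"
      by (simp add: closure_of_subset)
    ultimately show ?thesis
      by blast
  qed
  have "weighted_dist v p \<Omega> f W = 0 \<longleftrightarrow>
      (\<forall>e>0. \<exists>g\<in>W. \<forall>x\<in>\<Omega>. p (v x *\<^sub>R f x - v x *\<^sub>R g x) < e)"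
    by (simp add: weighted_dist_eq_0_iff scaled)
  also have "\<dots> \<longleftrightarrow> (\<forall>\<epsilon>>0. \<forall>S. finite S \<longrightarrow> (\<exists>g\<in>W. \<forall>x\<in>\<Omega>. \<forall>xi\<in>S.
        p (v x *\<^sub>R f x - xi) < \<epsilon> \<longrightarrow> p (v x *\<^sub>R g x - xi) < 2 * \<epsilon>))"
    using uniform_approx_iff_local_approx[where F = "\<lambda>x. v x *\<^sub>R f x" and G = "\<lambda>g x. v x *\<^sub>R g x",
        OF p totally_bounded] by simp
  finally show ?thesis .
qed

end
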